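(* Let $n\ge 1$ and let $F:\mathbb{F}_{2^n}\to\mathbb{F}_{2^n}$ be any function, identified with its associated polynomial $F(X)$ over $\mathbb{F}_{2^n}$. Then $$\sum_{b\in \mathbb{F}_{2^n}^*}\ \sum_{v_1,v_2\in \mathbb{F}_{2^n}}W_F(bv_1,v_1)\,W_F(bv_2,v_2)\,W_F(b(v_1+v_2),v_1+v_2)\;+\;2^{n+2}\sum_{v\in \mathbb{F}_{2^n}^*}W_F^2(0,v)\;-\;2^{4n+2}\;+\;2^{3n+2}\;\ge\; 0,$$ and equality holds if and only if $F$ is an o-polynomial.
   Context: For a positive integer $n$, $tr_n:\mathbb{F}_{2^n}\to\mathbb{F}_2$ denotes the absolute trace $tr_n(x)=x+x^2+x^{2^2}+\cdots+x^{2^{n-1}}$, and $\mathbb{F}_{2^n}^*=\mathbb{F}_{2^n}\setminus\{0\}$. For $F:\mathbb{F}_{2^n}\to\mathbb{F}_{2^n}$ and $(u,v)\in\mathbb{F}_{2^n}^2$, the Walsh transform is $W_F(u,v)=\sum_{x\in\mathbb{F}_{2^n}}(-1)^{tr_n(vF(x))+tr_n(ux)}$ (an integer). In the projective plane $PG(2,2^n)$ (points = 1-dimensional subspaces of $\mathbb{F}_{2^n}^3$, lines = 2-dimensional subspaces, incidence = inclusion), a hyperoval is a set of $2^n+2$ points no three of which lie on a common line. A function (polynomial) $F$ over $\mathbb{F}_{2^n}$ is an o-polynomial if the set $\{(1,t,F(t)) : t\in\mathbb{F}_{2^n}\}\cup\{(0,1,0),(0,0,1)\}$ is a hyperoval of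 $PG(2,2^n)$. Equivalently (known fact), $F$ is an o-polynomial if and only if for every $a\in\mathbb{F}_{2^n}$ and every $b\in\mathbb{F}_{2^n}^*$ the equation $F(x)+bx=a$ has either $0$ or $2$ solutions $x\in\mathbb{F}_{2^n}$; in that case $F$ is a permutation of $\mathbb{F}_{2^n}$. *)

theory Defs
  imports Main
begin

definition abs_trace :: "nat \<Rightarrow> 'a::field \<Rightarrow> 'a" where
  "abs_trace n x = (\<Sum>i<n. x ^ (2 ^ i))"

text \<open>The trace value (an element of F_2 = {0,1}) viewed as an exponent 0/1.\<close>
definition trace_bit :: "nat \<Rightarrow> 'a::field \<Rightarrow> nat" where
  "trace_bit n x = (if abs_trace n x = 0 then 0 else 1)"

definition walsh :: "nat \<Rightarrow> ('a::{field,finite} \<Rightarrow> 'a) \<Rightarrow> 'a \<Rightarrow> 'a \<Rightarrow> int" where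
  "walsh n F u v = (\<Sum>x\<in>UNIV. (-1::int) ^ (trace_bit n (v * F x) + trace_bit n (u * x)))"

text \<open>Projective plane PG(2,q): points are 1-dimensional subspaces of F^3, represented by
  nonzero vectors; two representatives give the same point iff they are proportional.
  Lines are 2-dimensional subspaces, i.e. kernels of nonzero linear forms (a,b,c);
  a point p lies on the line l iff p \<subseteq> ker l.\<close>
definition same_point :: "'a::field \<times> 'a \<times> 'a \<Rightarrow> 'a \<times> 'a \<times> 'a \<Rightarrow> bool" where
  "same_point p q = (\<exists>c. c \<noteq> 0 \<and> q = (c * fst p, c * fst (snd p), c * snd (snd p)))"

definition incident :: "'a::field \<times> 'a \<times> 'a \<Rightarrow> 'a \<times> 'a \<times> 'a \<Rightarrow> bool" where
  "incident l p = (fst l * fst p + fst (snd l) * fst (snd p) + snd (snd l) * snd (snd p) = 0)"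

definition hyperoval :: "('a::{field,finite} \<times> 'a \<times> 'a) set \<Rightarrow> bool" where
  "hyperoval P \<longleftrightarrow>
     (\<forall>p\<in>P. p \<noteq> (0,0,0)) \<and>
     (\<forall>p\<in>P. \<forall>q\<in>P. same_point p q \<longrightarrow> p = q) \<and>
     card P = card (UNIV :: 'a set) + 2 \<and>
     (\<forall>p1\<in>P. \<forall>p2\<in>P. \<forall>p3\<in>P. p1 \<noteq> p2 \<and> p1 \<noteq> p3 \<and> p2 \<noteq> p3 \<longrightarrow>
        \<not> (\<exists>l. l \<noteq> (0,0,0) \<and> incident l p1 \<and> incident l p2 \<and> incident l p3))"

definition o_polynomial :: "('a::{field,finite} \<Rightarrow> 'a) \<Rightarrow> bool" where
  "o_polynomial F \<longleftrightarrow>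
     hyperoval ((\<lambda>t. (1, t, F t)) ` UNIV \<union> {(0, 1, 0), (0, 0, 1)})"

end

theory Submission
  imports Defs "HOL-Number_Theory.Residues" "HOL-Computational_Algebra.Polynomial"
begin

text \<open>
  With the additive character \<open>\<chi>(x) = (-1)^tr(x)\<close> one has \<open>W\<^sub>F(bv, v) = \<Sum>\<^sub>x \<chi>(v(F x + bx))\<close>.
  Orthogonality of \<open>\<chi>\<close> turns the inner double sum for fixed \<open>b\<close> into \<open>q\<^sup>2 \<Sum>\<^sub>z N\<^sub>b(z)\<^sup>2\<close>
  and \<open>\<Sum>\<^sub>v W\<^sub>F(0,v)\<^sup>2\<close> into \<open>q \<Sum>\<^sub>z N\<^sub>0(z)\<close>, where \<open>q = 2^n\<close> and \<open>N\<^sub>b(z)\<close> is the number of \<open>x\<close>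
  with \<open>F x + bx = F z + bz\<close>. Two distinct points \<open>x, z\<close> collide for exactly one \<open>b\<close>, which is
  nonzero iff \<open>F x \<noteq> F z\<close>; hence \<open>\<Sum>\<^bsub>b\<noteq>0\<^esub> \<Sum>\<^sub>z N\<^sub>b(z) = 2q\<^sup>2 - q - \<Sum>\<^sub>z N\<^sub>0(z)\<close>, and the expression
  of the theorem becomes \<open>q\<^sup>2\<close> times
  \<open>\<Sum>\<^bsub>b\<noteq>0\<^esub> \<Sum>\<^sub>z (N\<^sub>b(z) - 1)(N\<^sub>b(z) - 2) + \<Sum>\<^sub>z (N\<^sub>0(z) - 1)\<close>.
  Since every \<open>N \<ge> 1\<close>, all terms are nonnegative, and they all vanish iff \<open>F\<close> is injective and
  each \<open>F x + bx = c\<close> with \<open>b \<noteq> 0\<close> has at most two solutions, i.e. iff no line of \<open>PG(2,q)\<close>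
  contains three of the points \<open>(1,t,F t)\<close>, \<open>(0,1,0)\<close>, \<open>(0,0,1)\<close>.
\<close>

section \<open>O-polynomials and fibre sizes\<close>

lemma card_le_2_iff_no_three_distinct:
  assumes "finite A"
  shows "card A \<le> 2 \<longleftrightarrow> \<not> (\<exists>x\<in>A. \<exists>y\<in>A. \<exists>z\<in>A. x \<noteq> y \<and> x \<noteq> z \<and> y \<noteq> z)"
proof
  assume "card A \<le> 2"
  show "\<not> (\<exists>x\<in>A. \<exists>y\<in>A. \<exists>z\<in>A. x \<noteq> y \<and> x \<noteq> z \<and> y \<noteq> z)"
  proof clarify
    fix x y z assume "x \<in> A" "y \<in> A" "z \<in> A" "x \<noteq> y" "x \<noteq> z" "y \<noteq> z"
    then have "card {x, y, z} \<le> card A"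
      by (intro card_mono assms) auto
    with \<open>card A \<le> 2\<close> \<open>x \<noteq> y\<close> \<open>x \<noteq> z\<close> \<open>y \<noteq> z\<close> show False
      by simp
  qed
next
  assume no_three: "\<not> (\<exists>x\<in>A. \<exists>y\<in>A. \<exists>z\<in>A. x \<noteq> y \<and> x \<noteq> z \<and> y \<noteq> z)"
  show "card A \<le> 2"
  proof (rule ccontr)
    assume "\<not> card A \<le> 2"
    then obtain B where "B \<subseteq> A" "card B = 3"
      using obtain_subset_with_card_n[of 3 A] by auto
    with no_three show False
      by (auto simp: card_3_iff)
  qed
qed

lemma no_three_collinear_iff_card_le_2:
  assumes "finite P"
  shows "(\<forall>p1\<in>P. \<forall>p2\<in>P. \<forall>p3\<in>P. p1 \<noteq> p2 \<and> p1 \<noteq> p3 \<and> p2 \<noteq> p3 \<longrightarrow>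
            \<not> (\<exists>l. Q l \<and> R l p1 \<and> R l p2 \<and> R l p3))
    \<longleftrightarrow> (\<forall>l. Q l \<longrightarrow> card {p \<in> P. R l p} \<le> 2)"
proof -
  have "card {p \<in> P. R l p} \<le> 2 \<longleftrightarrow>
      \<not> (\<exists>x\<in>P. \<exists>y\<in>P. \<exists>z\<in>P. R l x \<and> R l y \<and> R l z \<and> x \<noteq> y \<and> x \<noteq> z \<and> y \<noteq> z)" for l
    using assms by (subst card_le_2_iff_no_three_distinct) auto
  then show ?thesis
    by blast
qed

definition oval_points :: "('a::field \<Rightarrow> 'a) \<Rightarrow> ('a \<times> 'a \<times> 'a) set" where
  "oval_points F = range (\<lambda>t. (1, t, F t)) \<union> {(0, 1, 0), (0, 0, 1)}"

lemma o_polynomial_iff_card_incident_le_2: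
  fixes F :: "'a::{field,finite} \<Rightarrow> 'a"
  shows "o_polynomial F \<longleftrightarrow> (\<forall>l. l \<noteq> (0, 0, 0) \<longrightarrow> card {p \<in> oval_points F. incident l p} \<le> 2)"
proof -
  have "card (oval_points F) = card (range (\<lambda>t. (1 :: 'a, t, F t))) + card {(0 :: 'a, 1 :: 'a, 0 :: 'a), (0, 0, 1)}"
    unfolding oval_points_def by (intro card_Un_disjoint) auto
  also have "card (range (\<lambda>t. (1 :: 'a, t, F t))) = card (UNIV :: 'a set)"
    by (rule card_image) (auto simp: inj_on_def)
  finally have "card (oval_points F) = card (UNIV :: 'a set) + 2"
    by simp
  moreover have "\<forall>p\<in>oval_points F. p \<noteq> (0, 0, 0)"
    and "\<forall>p\<in>oval_points F. \<forall>q\<in>oval_points F. same_point p q \<longrightarrow> p = q"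
    unfolding oval_points_def same_point_def by auto
  moreover have "(\<forall>p1\<in>oval_points F. \<forall>p2\<in>oval_points F. \<forall>p3\<in>oval_points F.
        p1 \<noteq> p2 \<and> p1 \<noteq> p3 \<and> p2 \<noteq> p3 \<longrightarrow>
        \<not> (\<exists>l. l \<noteq> (0, 0, 0) \<and> incident l p1 \<and> incident l p2 \<and> incident l p3))
      \<longleftrightarrow> (\<forall>l. l \<noteq> (0, 0, 0) \<longrightarrow> card {p \<in> oval_points F. incident l p} \<le> 2)"
    by (rule no_three_collinear_iff_card_le_2) simp
  ultimately show ?thesis
    unfolding o_polynomial_def hyperoval_def oval_points_def[symmetric] by blast
qed

lemma card_oval_points_incident:
  fixes F :: "'a::{field,finite} \<Rightarrow> 'a"
  shows "card {p \<in> oval_points F. incident (a, b, c) p}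
    = card {t. a + b * t + c * F t = 0} + (if b = 0 then 1 else 0) + (if c = 0 then 1 else 0)"
proof -
  let ?S = "{t. a + b * t + c * F t = 0}"
  have "{p \<in> oval_points F. incident (a, b, c) p}
      = (\<lambda>t. (1, t, F t)) ` ?S \<union> {p \<in> {(0, 1, 0), (0, 0, 1)}. incident (a, b, c) p}"
    by (auto simp: oval_points_def incident_def)
  moreover have "card ((\<lambda>t. (1 :: 'a, t, F t)) ` ?S \<union> {p \<in> {(0, 1, 0), (0, 0, 1)}. incident (a, b, c) p})
      = card ((\<lambda>t. (1 :: 'a, t, F t)) ` ?S) + card {p \<in> {(0, 1, 0), (0, 0, 1)}. incident (a, b, c) p}"
    by (intro card_Un_disjoint) auto
  moreover have "card ((\<lambda>t. (1 :: 'a, t, F t)) ` ?S) = card ?S"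
    by (rule card_image) (auto simp: inj_on_def)
  moreover have "card {p \<in> {(0, 1, 0), (0, 0, 1)}. incident (a, b, c) p}
      = (if b = 0 then 1 else 0) + (if c = 0 then 1 else 0)"
  proof -
    have "{p \<in> {(0, 1, 0), (0, 0, 1)}. incident (a, b, c) p}
        = (if b = 0 then {(0, 1, 0)} else {}) \<union> (if c = 0 then {(0, 0, 1)} else {})"
      by (auto simp: incident_def)
    then show ?thesis
      by simp
  qed
  ultimately show ?thesis
    by simp
qed

lemma line_section_eq_vimage:
  fixes F :: "'a::field \<Rightarrow> 'a"
  assumes "c \<noteq> 0"
  shows "{t. a + b * t + c * F t = 0} = (\<lambda>x. F x + (b / c) * x) -` {- a / c}"
proof -
  have "a + b * t + c * F t = c * ((F t + (b / c) * t) - (- a / c))" for t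
    using assms by (simp add: field_simps)
  then show ?thesis
    using assms by (auto simp: eq_neg_iff_add_eq_0)
qed

lemma o_polynomial_iff_card_vimage:
  fixes F :: "'a::{field,finite} \<Rightarrow> 'a"
  shows "o_polynomial F \<longleftrightarrow>
    (\<forall>y. card (F -` {y}) \<le> 1) \<and> (\<forall>b y. b \<noteq> 0 \<longrightarrow> card ((\<lambda>x. F x + b * x) -` {y}) \<le> 2)"
proof -
  have lines: "o_polynomial F \<longleftrightarrow> (\<forall>a b c. (a, b, c) \<noteq> (0, 0, 0) \<longrightarrow>
      card {t. a + b * t + c * F t = 0} + (if b = 0 then 1 else 0) + (if c = 0 then 1 else 0) \<le> 2)"
    unfolding o_polynomial_iff_card_incident_le_2 by (simp add: card_oval_points_incident)
  show ?thesis
  proof (intro iffI conjI allI impI)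
    assume "o_polynomial F"
    then have line_bound: "card {t. a + b * t + c * F t = 0} + (if b = 0 then 1 else 0)
        + (if c = 0 then 1 else 0) \<le> 2" if "(a, b, c) \<noteq> (0, 0, 0)" for a b c
      using lines that by blast
    show "card (F -` {y}) \<le> 1" for y
      using line_bound[of "- y" 0 1] line_section_eq_vimage[where c = 1 and a = "- y" and b = 0] by simp
    show "card ((\<lambda>x. F x + b * x) -` {y}) \<le> 2" if "b \<noteq> 0" for b y
      using line_bound[of "- y" b 1] line_section_eq_vimage[where c = 1 and a = "- y"] by simp
  next
    assume "(\<forall>y. card (F -` {y}) \<le> 1) \<and> (\<forall>b y. b \<noteq> 0 \<longrightarrow> card ((\<lambda>x. F x + b * x) -` {y}) \<le> 2)"
    then have fibres_F: "card (F -` {y}) \<le> 1"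
      and fibres_secant: "b \<noteq> 0 \<Longrightarrow> card ((\<lambda>x. F x + b * x) -` {y}) \<le> 2"
      for b y
      by blast+
    have "card {t. a + b * t + c * F t = 0} + (if b = 0 then 1 else 0) + (if c = 0 then 1 else 0) \<le> 2"
      if "(a, b, c) \<noteq> (0, 0, 0)" for a b c
    proof (cases "c = 0")
      case True
      then have "{t. a + b * t + c * F t = 0} = (if b = 0 then {} else {- a / b})"
        using that by (auto simp: field_simps eq_neg_iff_add_eq_0 add.commute)
      then show ?thesis
        using True by simp
    next
      case False
      then show ?thesis
        using fibres_F[of "- a / c"] fibres_secant[of "b / c" "- a / c"] line_section_eq_vimage[OF False]
        by auto
    qed
    then show "o_polynomial F"
      using lines by blast
  qed
qed

definition fibre_card :: "('a \<Rightarrow> 'b) \<Rightarrow> 'a \<Rightarrow> nat" where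
  "fibre_card G z = card (G -` {G z})"

lemma fibre_card_pos: "0 < fibre_card (G :: 'a::finite \<Rightarrow> 'b) z"
  by (auto simp: fibre_card_def card_gt_0_iff)

lemma all_fibre_card_le_iff: "(\<forall>z. fibre_card G z \<le> k) \<longleftrightarrow> (\<forall>y. card (G -` {y}) \<le> k)"
  unfolding fibre_card_def
proof (intro iffI allI)
  fix y
  assume le: "\<forall>z. card (G -` {G z}) \<le> k"
  show "card (G -` {y}) \<le> k"
  proof (cases "y \<in> range G")
    case False
    then have "G -` {y} = {}"
      by auto
    then show ?thesis
      by simp
  qed (use le in auto)
qed simp

lemma card_colliding_slopes:
  fixes F :: "'a::{field,finite} \<Rightarrow> 'a"
  shows "card {b \<in> UNIV - {0}. F x + b * x = F z + b * z}
    = (if x = z then card (UNIV :: 'a set) - 1 else if F x = F z then 0 else 1)"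
proof (cases "x = z")
  case False
  then have "F x + b * x = F z + b * z \<longleftrightarrow> b = (F z - F x) / (x - z)" for b
    by (auto simp: field_simps)
  then have "{b \<in> UNIV - {0}. F x + b * x = F z + b * z} = (if F x = F z then {} else {(F z - F x) / (x - z)})"
    using False by auto
  then show ?thesis
    using False by simp
next
  case True
  then have "{b \<in> UNIV - {0}. F x + b * x = F z + b * z} = UNIV - {0}"
    by auto
  then show ?thesis
    using True by (simp add: card_Diff_singleton)
qed

lemma sum_fibre_card_add_linear:
  fixes F :: "'a::{field,finite} \<Rightarrow> 'a"
  defines "q \<equiv> int (card (UNIV :: 'a set))"
  shows "(\<Sum>b\<in>UNIV - {0}. \<Sum>z\<in>UNIV. int (fibre_card (\<lambda>x. F x + b * x) z))
    = 2 * q\<^sup>2 - q - (\<Sum>z\<in>UNIV. int (fibre_card F z))"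
proof -
  have card_vimage: "int (card (G -` {c})) = (\<Sum>x\<in>UNIV. if G x = c then 1 else 0)"
    for G :: "'a \<Rightarrow> 'a" and c
    by (simp add: sum.If_cases vimage_def)
  have "(\<Sum>b\<in>UNIV - {0}. \<Sum>z\<in>UNIV. int (card ((\<lambda>x. F x + b * x) -` {F z + b * z})))
      = (\<Sum>z\<in>UNIV. \<Sum>x\<in>UNIV. \<Sum>b\<in>UNIV - {0}. if F x + b * x = F z + b * z then 1 else 0)"
    unfolding fibre_card_def card_vimage by (subst sum.swap) (simp add: sum.swap[of _ "UNIV - {0}"])
  also have "\<dots> = (\<Sum>z\<in>UNIV. \<Sum>x\<in>UNIV. (if x = z then q - 1 else 0) + (1 - (if F x = F z then 1 else 0)))"
  proof (intro sum.cong refl)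
    fix x z
    have "(\<Sum>b\<in>UNIV - {0}. if F x + b * x = F z + b * z then 1 else 0)
        = int (card {b \<in> UNIV - {0}. F x + b * x = F z + b * z})"
      by (simp flip: sum.inter_filter)
    then show "(\<Sum>b\<in>UNIV - {0}. if F x + b * x = F z + b * z then 1 else 0)
        = (if x = z then q - 1 else 0) + (1 - (if F x = F z then 1 else 0))"
      unfolding card_colliding_slopes q_def using finite_UNIV_card_ge_0[where 'a = 'a]
      by (simp add: of_nat_diff)
  qed
  also have "\<dots> = 2 * q\<^sup>2 - q - (\<Sum>z\<in>UNIV. int (card (F -` {F z})))"
    by (simp add: fibre_card_def card_vimage sum.distrib sum_subtractf q_def power2_eq_square algebra_simps)
  finally show ?thesis
    by (simp only: fibre_card_def)
qed

lemma diff_1_mult_diff_2_nonneg: "1 \<le> (k :: int) \<Longrightarrow> 0 \<le> (k - 1) * (k - 2)"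
  by (cases "k = 1") (simp_all add: mult_nonneg_nonneg)

definition hyperoval_defect :: "('a::{field,finite} \<Rightarrow> 'a) \<Rightarrow> int" where
  "hyperoval_defect F =
    (\<Sum>b\<in>UNIV - {0}. \<Sum>z\<in>UNIV.
       (int (fibre_card (\<lambda>x. F x + b * x) z) - 1) * (int (fibre_card (\<lambda>x. F x + b * x) z) - 2))
    + (\<Sum>z\<in>UNIV. int (fibre_card F z) - 1)"

lemma hyperoval_defect_nonneg: "0 \<le> hyperoval_defect F"
  unfolding hyperoval_defect_def
  by (intro add_nonneg_nonneg sum_nonneg diff_1_mult_diff_2_nonneg)
    (simp_all add: fibre_card_pos Suc_le_eq)

lemma hyperoval_defect_eq_0_iff: "hyperoval_defect F = 0 \<longleftrightarrow> o_polynomial F"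
proof -
  let ?N = "\<lambda>b z. int (fibre_card (\<lambda>x. F x + b * x) z)"
  have N_ge_1: "1 \<le> ?N b z" for b z
    by (simp add: fibre_card_pos Suc_le_eq)
  have m_nonneg: "0 \<le> int (fibre_card F z) - 1" for z
    by (simp add: fibre_card_pos Suc_le_eq)
  have inner_nonneg: "0 \<le> (\<Sum>z\<in>UNIV. (?N b z - 1) * (?N b z - 2))" for b
    by (intro sum_nonneg diff_1_mult_diff_2_nonneg N_ge_1)
  have inner: "(\<Sum>z\<in>UNIV. (?N b z - 1) * (?N b z - 2)) = 0 \<longleftrightarrow> (\<forall>z. ?N b z \<le> 2)" for b
  proof -
    have "(\<Sum>z\<in>UNIV. (?N b z - 1) * (?N b z - 2)) = 0 \<longleftrightarrow> (\<forall>z\<in>UNIV. (?N b z - 1) * (?N b z - 2) = 0)"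
      by (intro sum_nonneg_eq_0_iff) (auto intro: diff_1_mult_diff_2_nonneg N_ge_1)
    moreover have "(?N b z - 1) * (?N b z - 2) = 0 \<longleftrightarrow> ?N b z \<le> 2" for z
      using N_ge_1[of b z] by auto
    ultimately show ?thesis
      by blast
  qed
  have outer: "(\<Sum>b\<in>UNIV - {0}. \<Sum>z\<in>UNIV. (?N b z - 1) * (?N b z - 2)) = 0 \<longleftrightarrow>
      (\<forall>b\<in>UNIV - {0}. (\<Sum>z\<in>UNIV. (?N b z - 1) * (?N b z - 2)) = 0)"
    by (rule sum_nonneg_eq_0_iff) (simp_all add: inner_nonneg)
  have fibres_F: "(\<Sum>z\<in>UNIV. int (fibre_card F z) - 1) = 0 \<longleftrightarrow> (\<forall>z\<in>UNIV. int (fibre_card F z) - 1 = 0)"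
    by (rule sum_nonneg_eq_0_iff) (simp_all only: m_nonneg finite)
  have fibre_F_iff: "int (fibre_card F z) - 1 = 0 \<longleftrightarrow> fibre_card F z \<le> 1" for z
    using fibre_card_pos[of F z] by linarith
  have "hyperoval_defect F = 0 \<longleftrightarrow>
      (\<Sum>b\<in>UNIV - {0}. \<Sum>z\<in>UNIV. (?N b z - 1) * (?N b z - 2)) = 0 \<and> (\<Sum>z\<in>UNIV. int (fibre_card F z) - 1) = 0"
    unfolding hyperoval_defect_def by (intro add_nonneg_eq_0_iff sum_nonneg inner_nonneg m_nonneg)
  also have "\<dots> \<longleftrightarrow>
      (\<forall>z. fibre_card F z \<le> 1) \<and> (\<forall>b. b \<noteq> 0 \<longrightarrow> (\<forall>z. fibre_card (\<lambda>x. F x + b * x) z \<le> 2))"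
    unfolding outer fibres_F inner fibre_F_iff by auto
  also have "\<dots> \<longleftrightarrow> o_polynomial F"
    by (simp add: o_polynomial_iff_card_vimage all_fibre_card_le_iff)
  finally show ?thesis .
qed

lemma hyperoval_defect_eq:
  fixes F :: "'a::{field,finite} \<Rightarrow> 'a"
  defines "q \<equiv> int (card (UNIV :: 'a set))"
  shows "hyperoval_defect F = (\<Sum>b\<in>UNIV - {0}. \<Sum>z\<in>UNIV. (int (fibre_card (\<lambda>x. F x + b * x) z))\<^sup>2)
    + 4 * (\<Sum>z\<in>UNIV. int (fibre_card F z)) - 4 * q\<^sup>2"
proof -
  let ?B = "UNIV - {0 :: 'a}"
  let ?N = "\<lambda>b z. int (fibre_card (\<lambda>x. F x + b * x) z)"
  define M where "M = (\<Sum>z\<in>UNIV. int (fibre_card F z))"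
  have card_B: "int (card ?B) = q - 1"
    by (simp add: q_def card_Diff_subset of_nat_diff finite_UNIV_card_ge_0 Suc_le_eq)
  have "(\<Sum>b\<in>?B. \<Sum>z\<in>UNIV. (?N b z - 1) * (?N b z - 2))
      = (\<Sum>b\<in>?B. \<Sum>z\<in>UNIV. (?N b z)\<^sup>2 - 3 * ?N b z + 2)"
    by (intro sum.cong refl) (simp add: algebra_simps power2_eq_square)
  also have "\<dots> = (\<Sum>b\<in>?B. \<Sum>z\<in>UNIV. (?N b z)\<^sup>2) - 3 * (\<Sum>b\<in>?B. \<Sum>z\<in>UNIV. ?N b z) + 2 * (q - 1) * q"
    using card_B by (simp add: q_def sum.distrib sum_subtractf sum_distrib_left)
  finally have "hyperoval_defect F
      = (\<Sum>b\<in>?B. \<Sum>z\<in>UNIV. (?N b z)\<^sup>2) - 3 * (2 * q\<^sup>2 - q - M) + 2 * (q - 1) * q + M - q"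
    unfolding hyperoval_defect_def M_def sum_fibre_card_add_linear[of F, folded q_def]
    by (simp add: q_def sum_subtractf)
  then show ?thesis
    unfolding M_def by (simp add: algebra_simps power2_eq_square)
qed

section \<open>The additive character of a field of order \<open>2^n\<close>\<close>

definition add_char :: "nat \<Rightarrow> 'a::field \<Rightarrow> int" where
  "add_char n x = (-1) ^ trace_bit n x"

lemma CHAR_eq_2_if_card_eq_power_2:
  assumes "card (UNIV :: 'a::{field,finite} set) = 2 ^ n"
  shows "CHAR('a) = 2"
proof -
  have "prime CHAR('a)"
    by (rule prime_CHAR_semidom) (simp add: finite_imp_CHAR_pos)
  moreover have "CHAR('a) dvd 2 ^ n"
    using CHAR_dvd_CARD[where 'a='a] assms by simp
  ultimately have "CHAR('a) dvd 2"
    using prime_dvd_power_nat by blast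
  with \<open>prime CHAR('a)\<close> show ?thesis
    by (metis prime_nat_iff two_is_prime_nat not_prime_1)
qed

lemma power_card_UNIV_eq_self:
  fixes x :: "'a::{field,finite}"
  shows "x ^ card (UNIV :: 'a set) = x"
proof (cases "x = 0")
  case False
  have "(\<Prod>y\<in>UNIV - {0}. x * y) = (\<Prod>y\<in>UNIV - {0}. y)"
    by (rule prod.reindex_bij_witness[of _ "\<lambda>y. y / x" "\<lambda>y. x * y"]) (use False in auto)
  then have "x ^ card (UNIV - {0 :: 'a}) = 1"
    by (simp add: prod.distrib)
  moreover have "card (UNIV :: 'a set) = Suc (card (UNIV - {0 :: 'a}))"
    using card_Suc_Diff1[of UNIV "0 :: 'a"] by simp
  ultimately show ?thesis
    by (metis mult_1 power_Suc2)
qed (simp add: finite_UNIV_card_ge_0)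

lemma abs_trace_add:
  fixes x y :: "'a::field"
  assumes "CHAR('a) = 2"
  shows "abs_trace n (x + y) = abs_trace n x + abs_trace n y"
  unfolding abs_trace_def
  by (simp add: freshmans_dream'[of "2 ^ _"] assms sum.distrib)

lemma abs_trace_0 [simp]: "abs_trace n (0 :: 'a::field) = 0"
  by (simp add: abs_trace_def zero_power)


context
  fixes n :: nat
  assumes card_UNIV: "card (UNIV :: 'a::{field,finite} set) = 2 ^ n"
begin

lemma abs_trace_square: "(abs_trace n x)\<^sup>2 = abs_trace n (x :: 'a)"
proof -
  have char: "CHAR('a) = 2"
    using CHAR_eq_2_if_card_eq_power_2[OF card_UNIV] .
  have "(abs_trace n x)\<^sup>2 = (\<Sum>i<n. (x ^ 2 ^ i)\<^sup>2)"
    unfolding abs_trace_def by (rule freshmans_dream_sum'[where n = 1]) (simp_all add: char)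
  also have "\<dots> = (\<Sum>i<n. x ^ 2 ^ Suc i)"
    by (simp add: power_mult[symmetric] mult.commute)
  also have "\<dots> = abs_trace n x"
  proof -
    have "x ^ 2 ^ 0 + (\<Sum>i<n. x ^ 2 ^ Suc i) = (\<Sum>i<n. x ^ 2 ^ i) + x ^ 2 ^ n"
      using sum.lessThan_Suc_shift[of "\<lambda>i. x ^ 2 ^ i" n] sum.lessThan_Suc[of "\<lambda>i. x ^ 2 ^ i" n]
      by argo
    moreover have "x ^ 2 ^ n = x"
      using power_card_UNIV_eq_self[of x] by (simp only: card_UNIV)
    ultimately show ?thesis
      unfolding abs_trace_def by (metis add.commute add_left_cancel power_0 power_one_right)
  qed
  finally show ?thesis .
qed

lemma abs_trace_eq_0_or_1: "abs_trace n (x :: 'a) = 0 \<or> abs_trace n x = 1"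
proof -
  have "abs_trace n x * (abs_trace n x - 1) = 0"
    using abs_trace_square[of x] by (simp add: power2_eq_square algebra_simps)
  then show ?thesis
    by simp
qed

lemma add_char_add: "add_char n ((x :: 'a) + y) = add_char n x * add_char n y"
proof -
  have char: "CHAR('a) = 2"
    using CHAR_eq_2_if_card_eq_power_2[OF card_UNIV] .
  then have "(1 :: 'a) + 1 = 0"
    by (metis one_add_one of_nat_CHAR of_nat_numeral)
  then show ?thesis
    using abs_trace_eq_0_or_1[of x] abs_trace_eq_0_or_1[of y]
    unfolding add_char_def trace_bit_def abs_trace_add[OF char] by auto
qed

lemma add_char_0 [simp]: "add_char n (0 :: 'a) = 1"
  by (simp add: add_char_def trace_bit_def)

lemma exists_abs_trace_neq_0: "\<exists>w :: 'a. abs_trace n w \<noteq> 0"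
proof (rule ccontr)
  assume "\<not> ?thesis"
  then have trace_0: "abs_trace n (w :: 'a) = 0" for w
    by simp
  have "n \<noteq> 0"
  proof
    assume "n = 0"
    then have "card (UNIV :: 'a set) = 1"
      using card_UNIV by simp
    then show False
      by (metis card_1_singletonE singletonD UNIV_I zero_neq_one)
  qed
  define p :: "'a poly" where "p = (\<Sum>i<n. monom 1 (2 ^ i))"
  have "coeff p 1 = (\<Sum>i<n. if 2 ^ i = (1 :: nat) then 1 else 0)"
    unfolding p_def by (simp add: coeff_sum coeff_monom)
  also have "\<dots> = (\<Sum>i\<in>{0 :: nat}. 1)"
    by (rule sum.mono_neutral_cong_right) (use \<open>n \<noteq> 0\<close> in auto)
  finally have "p \<noteq> 0"
    by auto
  have "degree p \<le> 2 ^ (n - 1)"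
    unfolding p_def
  proof (rule degree_sum_le)
    fix i assume "i \<in> {..<n}"
    then have "(2 :: nat) ^ i \<le> 2 ^ (n - 1)"
      by (intro power_increasing) auto
    then show "degree (monom (1 :: 'a) (2 ^ i)) \<le> 2 ^ (n - 1)"
      using degree_monom_le order_trans by blast
  qed simp
  moreover have "{x. poly p x = 0} = UNIV"
    using trace_0 unfolding p_def abs_trace_def by (simp add: poly_sum poly_monom)
  then have "card (UNIV :: 'a set) \<le> degree p"
    using card_poly_roots_bound[OF \<open>p \<noteq> 0\<close>] by simp
  moreover have "(2 :: nat) ^ (n - 1) < 2 ^ n"
    using \<open>n \<noteq> 0\<close> by (intro power_strict_increasing) auto
  ultimately show False
    using card_UNIV by linarith
qed

lemma sum_add_char_mult: "(\<Sum>v\<in>UNIV. add_char n (v * a)) = (if a = (0 :: 'a) then 2 ^ n else 0)"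
proof (cases "a = 0")
  case True
  then show ?thesis
    using card_UNIV by simp
next
  case False
  obtain w :: 'a where "abs_trace n w \<noteq> 0"
    using exists_abs_trace_neq_0 by blast
  then have "add_char n w = -1"
    unfolding add_char_def trace_bit_def by simp
  have "(\<Sum>v\<in>UNIV. add_char n (v :: 'a)) = (\<Sum>v\<in>UNIV. add_char n (v + w))"
    by (rule sum.reindex_bij_witness[of _ "\<lambda>y. y + w" "\<lambda>v. v - w"]) auto
  also have "\<dots> = - (\<Sum>v\<in>UNIV. add_char n (v :: 'a))"
    by (simp add: add_char_add \<open>add_char n w = -1\<close> sum_negf)
  finally have "(\<Sum>v\<in>UNIV. add_char n (v :: 'a)) = 0"
    by simp
  moreover have "(\<Sum>v\<in>UNIV. add_char n (v * a)) = (\<Sum>v\<in>UNIV. add_char n (v :: 'a))"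
    by (rule sum.reindex_bij_witness[of _ "\<lambda>y. y / a" "\<lambda>v. v * a"]) (use False in auto)
  ultimately show ?thesis
    using False by simp
qed

section \<open>Walsh sums as fibre counts\<close>

lemma walsh_eq_sum_add_char: "walsh n F u v = (\<Sum>x\<in>UNIV. add_char n (v * F x + u * (x :: 'a)))"
  unfolding walsh_def add_char_add by (simp add: add_char_def power_add)

lemma walsh_mult_self_eq: "walsh n F (b * v) v = walsh n (\<lambda>x. F x + b * x) 0 (v :: 'a)"
  unfolding walsh_eq_sum_add_char by (simp add: algebra_simps)

lemma walsh_0_eq_sum_add_char: "walsh n G 0 v = (\<Sum>x\<in>UNIV. add_char n (v * G (x :: 'a)))"
  by (simp add: walsh_eq_sum_add_char)

lemma sum_walsh_mult_add_char:
  "(\<Sum>v\<in>UNIV. walsh n G 0 v * add_char n (v * c)) = 2 ^ n * int (card (G -` {c :: 'a}))"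
proof -
  have "G x + c = 0 \<longleftrightarrow> G x = c" for x
    using uminus_CHAR_2[OF CHAR_eq_2_if_card_eq_power_2[OF card_UNIV], of c]
    by (metis add_eq_0_iff2)
  have "(\<Sum>v\<in>UNIV. walsh n G 0 v * add_char n (v * c))
      = (\<Sum>v\<in>UNIV. \<Sum>x\<in>UNIV. add_char n (v * (G x + c)))"
    by (simp add: walsh_0_eq_sum_add_char sum_distrib_right add_char_add distrib_left)
  also have "\<dots> = (\<Sum>x\<in>UNIV. \<Sum>v\<in>UNIV. add_char n (v * (G x + c)))"
    by (rule sum.swap)
  also have "\<dots> = (\<Sum>x\<in>UNIV. if G x = c then 2 ^ n else 0)"
    by (simp add: sum_add_char_mult \<open>\<And>x. G x + c = 0 \<longleftrightarrow> G x = c\<close>)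
  also have "\<dots> = 2 ^ n * int (card (G -` {c}))"
    by (simp add: sum.If_cases vimage_def)
  finally show ?thesis .
qed

lemma sum_walsh_square:
  "(\<Sum>v\<in>UNIV. (walsh n G 0 v)\<^sup>2) = 2 ^ n * (\<Sum>z\<in>UNIV. int (fibre_card G (z :: 'a)))"
proof -
  have "(\<Sum>v\<in>UNIV. (walsh n G 0 v)\<^sup>2) = (\<Sum>v\<in>UNIV. \<Sum>z\<in>UNIV. walsh n G 0 v * add_char n (v * G z))"
    by (simp add: power2_eq_square sum_distrib_left walsh_0_eq_sum_add_char[of G])
  also have "\<dots> = (\<Sum>z\<in>UNIV. \<Sum>v\<in>UNIV. walsh n G 0 v * add_char n (v * G z))"
    by (rule sum.swap)
  finally show ?thesis
    by (simp add: sum_walsh_mult_add_char sum_distrib_left fibre_card_def)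
qed

lemma sum_walsh_triple:
  "(\<Sum>v1\<in>UNIV. \<Sum>v2\<in>UNIV. walsh n G 0 v1 * walsh n G 0 v2 * walsh n G 0 (v1 + v2))
     = (2 ^ n)\<^sup>2 * (\<Sum>z\<in>UNIV. (int (fibre_card G (z :: 'a)))\<^sup>2)"
proof -
  let ?W = "walsh n G 0"
  have "?W (v1 + v2) = (\<Sum>z\<in>UNIV. add_char n (v1 * G z) * add_char n (v2 * G z))" for v1 v2
    by (simp add: walsh_0_eq_sum_add_char distrib_right add_char_add)
  then have "(\<Sum>v1\<in>UNIV. \<Sum>v2\<in>UNIV. ?W v1 * ?W v2 * ?W (v1 + v2))
      = (\<Sum>v1\<in>UNIV. \<Sum>v2\<in>UNIV. \<Sum>z\<in>UNIV.
           (?W v1 * add_char n (v1 * G z)) * (?W v2 * add_char n (v2 * G z)))"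
    by (simp add: sum_distrib_left mult_ac)
  also have "\<dots> = (\<Sum>v1\<in>UNIV. \<Sum>z\<in>UNIV. \<Sum>v2\<in>UNIV.
           (?W v1 * add_char n (v1 * G z)) * (?W v2 * add_char n (v2 * G z)))"
    by (intro sum.cong refl sum.swap)
  also have "\<dots> = (\<Sum>z\<in>UNIV. \<Sum>v1\<in>UNIV. \<Sum>v2\<in>UNIV.
           (?W v1 * add_char n (v1 * G z)) * (?W v2 * add_char n (v2 * G z)))"
    by (rule sum.swap)
  also have "\<dots> = (\<Sum>z\<in>UNIV. (\<Sum>v\<in>UNIV. ?W v * add_char n (v * G z))\<^sup>2)"
    by (simp add: sum_product power2_eq_square)
  finally show ?thesis
    by (simp add: sum_walsh_mult_add_char power_mult_distrib sum_distrib_left fibre_card_def)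
qed

lemma walsh_expression_eq_hyperoval_defect:
  "(\<Sum>b\<in>UNIV - {0}. \<Sum>v1\<in>UNIV. \<Sum>v2\<in>UNIV.
      walsh n F (b * v1) v1 * walsh n F (b * v2) v2 * walsh n F (b * (v1 + v2)) (v1 + v2))
   + 2 ^ (n + 2) * (\<Sum>v\<in>UNIV - {0}. (walsh n F 0 v)\<^sup>2)
   - 2 ^ (4 * n + 2) + 2 ^ (3 * n + 2)
   = (2 ^ n)\<^sup>2 * hyperoval_defect (F :: 'a \<Rightarrow> 'a)"
proof -
  define q :: int where "q = 2 ^ n"
  define X where "X = (\<Sum>b\<in>UNIV - {0}. \<Sum>z\<in>UNIV. (int (fibre_card (\<lambda>x. F x + b * x) z))\<^sup>2)"
  define M where "M = (\<Sum>z\<in>UNIV. int (fibre_card F z))"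
  have triple: "(\<Sum>b\<in>UNIV - {0}. \<Sum>v1\<in>UNIV. \<Sum>v2\<in>UNIV.
      walsh n F (b * v1) v1 * walsh n F (b * v2) v2 * walsh n F (b * (v1 + v2)) (v1 + v2)) = q\<^sup>2 * X"
    unfolding walsh_mult_self_eq sum_walsh_triple X_def q_def by (simp add: sum_distrib_left)
  have "walsh n F 0 0 = q"
    using card_UNIV by (simp add: walsh_0_eq_sum_add_char q_def)
  then have square: "(\<Sum>v\<in>UNIV - {0}. (walsh n F 0 v)\<^sup>2) = q * M - q\<^sup>2"
    using sum_walsh_square[of F] by (simp add: sum_diff1 M_def q_def)
  have defect: "hyperoval_defect F = X + 4 * M - 4 * q\<^sup>2"
    unfolding hyperoval_defect_eq X_def M_def q_def card_UNIV by simp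
  have "(2 :: int) ^ (n + 2) = 4 * q" "(2 :: int) ^ (4 * n + 2) = 4 * q ^ 4"
    "(2 :: int) ^ (3 * n + 2) = 4 * q ^ 3"
    by (simp_all add: q_def power_add power_mult mult.commute)
  then show ?thesis
    unfolding triple square defect q_def[symmetric]
    by (simp add: algebra_simps power2_eq_square power3_eq_cube power4_eq_xxxx)
qed

end

theorem theorem2:
  fixes F :: "'a::{field,finite} \<Rightarrow> 'a" and n :: nat
  assumes "n \<ge> 1" and "card (UNIV :: 'a set) = 2 ^ n"
  shows "(\<Sum>b\<in>UNIV - {0}. \<Sum>v1\<in>UNIV. \<Sum>v2\<in>UNIV.
            walsh n F (b * v1) v1 * walsh n F (b * v2) v2 * walsh n F (b * (v1 + v2)) (v1 + v2))
         + 2 ^ (n + 2) * (\<Sum>v\<in>UNIV - {0}. (walsh n F 0 v)\<^sup>2)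
         - 2 ^ (4 * n + 2) + 2 ^ (3 * n + 2) \<ge> 0
      \<and> ((\<Sum>b\<in>UNIV - {0}. \<Sum>v1\<in>UNIV. \<Sum>v2\<in>UNIV.
            walsh n F (b * v1) v1 * walsh n F (b * v2) v2 * walsh n F (b * (v1 + v2)) (v1 + v2))
         + 2 ^ (n + 2) * (\<Sum>v\<in>UNIV - {0}. (walsh n F 0 v)\<^sup>2)
         - 2 ^ (4 * n + 2) + 2 ^ (3 * n + 2) = 0 \<longleftrightarrow> o_polynomial F)"
  using walsh_expression_eq_hyperoval_defect[OF assms(2), of F]
    hyperoval_defect_nonneg[of F] hyperoval_defect_eq_0_iff[of F]
  by simp

end
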